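(* Let $n\geq 2$ and let $M=(M_{ij})_{1\le i,j\le n}$ be an $n\times n$ matrix of integers with $M_{ij}>0$ for all $i,j$, $M_{11}=1$, and $M_{ii}>1$ for all $i\in\{2,\dots,n\}$. Then $\mathrm{Cat}(M)\neq\emptyset$ if and only if $M_{ii}>M_{1i}M_{i1}$ for all $i\in\{2,\dots,n\}$ and $M_{ij}\geq M_{i1}M_{1j}$ for all $i,j\in\{2,\dots,n\}$.
   Context: For an $n\times n$ matrix $M=(m_{ij})$ with entries in the natural numbers, $\mathrm{Cat}(M)$ denotes the collection of categories $A$ with exactly $n$ distinct objects $x_1,\dots,x_n$ such that $|A(x_i,x_j)|=m_{ij}$ for all $i,j$, where $A(x_i,x_j)$ is the set of morphisms from $x_i$ to $x_j$. *)

theory Defs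
  imports Main
begin

text \<open>A (small) category whose objects are 0, ..., n-1 (object i corresponds to x_(i+1)).\<close>

definition is_category ::
  "nat \<Rightarrow> (nat \<Rightarrow> nat \<Rightarrow> 'm set) \<Rightarrow> (nat \<Rightarrow> nat \<Rightarrow> nat \<Rightarrow> 'm \<Rightarrow> 'm \<Rightarrow> 'm) \<Rightarrow> (nat \<Rightarrow> 'm) \<Rightarrow> bool"
where
  "is_category n Hom cmp ident \<longleftrightarrow>
     (\<forall>i<n. ident i \<in> Hom i i) \<and>
     (\<forall>i<n. \<forall>j<n. \<forall>k<n. \<forall>f\<in>Hom i j. \<forall>g\<in>Hom j k. cmp i j k g f \<in> Hom i k) \<and>
     (\<forall>i<n. \<forall>j<n. \<forall>k<n. \<forall>l<n. \<forall>f\<in>Hom i j. \<forall>g\<in>Hom j k. \<forall>h\<in>Hom k l.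
        cmp i k l h (cmp i j k g f) = cmp i j l (cmp j k l h g) f) \<and>
     (\<forall>i<n. \<forall>j<n. \<forall>f\<in>Hom i j. cmp i j j (ident j) f = f \<and> cmp i i j f (ident i) = f)"

text \<open>Cat(M) is nonempty: there is a category with objects 0..n-1 and |Hom i j| = M i j.
  Since all hom-sets are finite, morphisms may w.l.o.g. be taken to be natural numbers.\<close>

definition Cat_nonempty :: "nat \<Rightarrow> (nat \<Rightarrow> nat \<Rightarrow> nat) \<Rightarrow> bool" where
  "Cat_nonempty n M \<longleftrightarrow>
     (\<exists>(Hom :: nat \<Rightarrow> nat \<Rightarrow> nat set) cmp ident.
        is_category n Hom cmp ident \<and>
        (\<forall>i<n. \<forall>j<n. finite (Hom i j) \<and> card (Hom i j) = M i j))"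

end

theory Submission
  imports Defs
begin

text \<open>Necessity: since the first object has only its identity as endomorphism, every pair
  \<open>f : x\<^sub>i \<rightarrow> x\<^sub>1\<close>, \<open>g : x\<^sub>1 \<rightarrow> x\<^sub>j\<close> can be recovered from \<open>g \<circ> f\<close> by composing with any morphism
  \<open>x\<^sub>j \<rightarrow> x\<^sub>1\<close> resp. \<open>x\<^sub>1 \<rightarrow> x\<^sub>i\<close>, so composition through \<open>x\<^sub>1\<close> injects \<open>A(x\<^sub>i,x\<^sub>1) \<times> A(x\<^sub>1,x\<^sub>j)\<close>
  into \<open>A(x\<^sub>i,x\<^sub>j)\<close>; for \<open>i = j\<close> the identity is missed, because otherwise \<open>x\<^sub>i\<close> would be a retract
  of \<open>x\<^sub>1\<close> and have trivial endomorphisms. Sufficiency: let every non-identity morphism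
  \<open>x\<^sub>i \<rightarrow> x\<^sub>k\<close> carry a morphism \<open>x\<^sub>i \<rightarrow> x\<^sub>1\<close> and a morphism \<open>x\<^sub>1 \<rightarrow> x\<^sub>k\<close>, and compose \<open>g \<circ> f\<close> by
  keeping the first datum of \<open>f\<close> and the second of \<open>g\<close>.\<close>

locale small_category =
  fixes n :: nat and Hom :: "nat \<Rightarrow> nat \<Rightarrow> 'm set"
    and cmp :: "nat \<Rightarrow> nat \<Rightarrow> nat \<Rightarrow> 'm \<Rightarrow> 'm \<Rightarrow> 'm" and ident :: "nat \<Rightarrow> 'm"
  assumes is_category: "is_category n Hom cmp ident"
begin

lemma ident_in_Hom: "i < n \<Longrightarrow> ident i \<in> Hom i i"
  using is_category by (simp add: is_category_def)

lemma cmp_in_Hom: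
  "\<lbrakk>i < n; j < n; k < n; f \<in> Hom i j; g \<in> Hom j k\<rbrakk> \<Longrightarrow> cmp i j k g f \<in> Hom i k"
  using is_category by (simp add: is_category_def)

lemma cmp_assoc:
  "\<lbrakk>i < n; j < n; k < n; l < n; f \<in> Hom i j; g \<in> Hom j k; h \<in> Hom k l\<rbrakk>
   \<Longrightarrow> cmp i k l h (cmp i j k g f) = cmp i j l (cmp j k l h g) f"
  using is_category by (simp add: is_category_def)

lemma cmp_ident_left: "\<lbrakk>i < n; j < n; f \<in> Hom i j\<rbrakk> \<Longrightarrow> cmp i j j (ident j) f = f"
  using is_category by (simp add: is_category_def)

lemma cmp_ident_right: "\<lbrakk>i < n; j < n; f \<in> Hom i j\<rbrakk> \<Longrightarrow> cmp i i j f (ident i) = f"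
  using is_category by (simp add: is_category_def)

context
  fixes z :: nat
  assumes z_less: "z < n" and Hom_z_z: "Hom z z = {ident z}"
begin

lemma cmp_through_retract_left:
  assumes "i < n" "j < n" "f \<in> Hom i z" "g \<in> Hom z j" "b \<in> Hom j z"
  shows "cmp i j z b (cmp i z j g f) = f"
proof -
  have "cmp z j z b g = ident z"
    using cmp_in_Hom[OF z_less \<open>j < n\<close> z_less \<open>g \<in> Hom z j\<close> \<open>b \<in> Hom j z\<close>] Hom_z_z by simp
  then show ?thesis
    using cmp_assoc[OF \<open>i < n\<close> z_less \<open>j < n\<close> z_less assms(3-5)] cmp_ident_left assms z_less
    by simp
qed

lemma cmp_through_retract_right:
  assumes "i < n" "j < n" "f \<in> Hom i z" "g \<in> Hom z j" "a \<in> Hom z i"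
  shows "cmp z i j (cmp i z j g f) a = g"
proof -
  have "cmp z i z f a = ident z"
    using cmp_in_Hom[OF z_less \<open>i < n\<close> z_less \<open>a \<in> Hom z i\<close> \<open>f \<in> Hom i z\<close>] Hom_z_z by simp
  then show ?thesis
    using cmp_assoc[OF z_less \<open>i < n\<close> z_less \<open>j < n\<close> assms(5,3,4)] cmp_ident_right assms z_less
    by simp
qed

lemma inj_on_cmp_through:
  assumes "i < n" "j < n" "Hom j z \<noteq> {}" "Hom z i \<noteq> {}"
  shows "inj_on (\<lambda>(f, g). cmp i z j g f) (Hom i z \<times> Hom z j)"
proof (rule inj_onI, clarify)
  obtain b a where b: "b \<in> Hom j z" and a: "a \<in> Hom z i" using assms(3,4) by blast
  fix f g f' g'
  assume "f \<in> Hom i z" "g \<in> Hom z j" "f' \<in> Hom i z" "g' \<in> Hom z j"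
    and "cmp i z j g f = cmp i z j g' f'"
  then show "f = f' \<and> g = g'"
    using cmp_through_retract_left[OF assms(1,2) _ _ b] cmp_through_retract_right[OF assms(1,2) _ _ a]
    by metis
qed

lemma card_Hom_through_le:
  assumes "i < n" "j < n" "finite (Hom i j)" "Hom j z \<noteq> {}" "Hom z i \<noteq> {}"
  shows "card (Hom i z) * card (Hom z j) \<le> card (Hom i j)"
proof -
  have "(\<lambda>(f, g). cmp i z j g f) ` (Hom i z \<times> Hom z j) \<subseteq> Hom i j"
    using cmp_in_Hom assms(1,2) z_less by auto
  then show ?thesis
    using card_inj_on_le[OF inj_on_cmp_through[OF assms(1,2,4,5)] _ assms(3)]
    by (simp add: card_cartesian_product)
qed

lemma Hom_trivial_if_ident_through:
  assumes "i < n" "f \<in> Hom i z" "g \<in> Hom z i" and gf: "cmp i z i g f = ident i"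
  shows "Hom i i = {ident i}"
proof -
  have "h = ident i" if h: "h \<in> Hom i i" for h
  proof -
    define k where "k = cmp i i z f h"
    have k: "k \<in> Hom i z" unfolding k_def using cmp_in_Hom assms(1,2) h z_less by blast
    have "h = cmp i z i g k"
      using cmp_ident_left[OF \<open>i < n\<close> \<open>i < n\<close> h] gf cmp_assoc[OF \<open>i < n\<close> \<open>i < n\<close> z_less \<open>i < n\<close> h assms(2,3)]
      by (simp add: k_def)
    moreover have "k = cmp i i z k (cmp i z i g f)"
      using cmp_ident_right[OF \<open>i < n\<close> z_less k] gf by simp
    then have "k = f"
      using cmp_through_retract_left[OF \<open>i < n\<close> \<open>i < n\<close> assms(2,3) k] by simp
    finally show ?thesis using gf by simp
  qed
  then show ?thesis using ident_in_Hom[OF \<open>i < n\<close>] by blast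
qed

lemma card_Hom_through_less:
  assumes "i < n" "finite (Hom i i)" "card (Hom i i) > 1" "Hom i z \<noteq> {}" "Hom z i \<noteq> {}"
  shows "card (Hom i z) * card (Hom z i) < card (Hom i i)"
proof -
  have "ident i \<notin> (\<lambda>(f, g). cmp i z i g f) ` (Hom i z \<times> Hom z i)"
  proof
    assume "ident i \<in> (\<lambda>(f, g). cmp i z i g f) ` (Hom i z \<times> Hom z i)"
    then have "Hom i i = {ident i}"
      using Hom_trivial_if_ident_through[OF \<open>i < n\<close>] by force
    with assms(3) show False by simp
  qed
  moreover have "(\<lambda>(f, g). cmp i z i g f) ` (Hom i z \<times> Hom z i) \<subseteq> Hom i i"
    using cmp_in_Hom assms(1) z_less by auto
  ultimately have "(\<lambda>(f, g). cmp i z i g f) ` (Hom i z \<times> Hom z i) \<subseteq> Hom i i - {ident i}"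
    by blast
  then have "card (Hom i z) * card (Hom z i) \<le> card (Hom i i - {ident i})"
    using card_inj_on_le[OF inj_on_cmp_through[OF assms(1,1,4,5)]] assms(2)
    by (simp add: card_cartesian_product)
  then show ?thesis using ident_in_Hom[OF \<open>i < n\<close>] assms(2,3) by simp
qed

end

end

lemma mult_add_less_mult:
  fixes a b A B :: nat
  assumes "a < A" "b < B"
  shows "a * B + b < A * B"
proof -
  have "a * B + b < (a + 1) * B" using assms(2) by simp
  also have "\<dots> \<le> A * B" using assms(1) by (intro mult_right_mono) auto
  finally show ?thesis .
qed

text \<open>The morphisms \<open>i \<rightarrow> k\<close> are \<open>{0..<M i k}\<close>. A code \<open>x < M i 0 * M 0 k\<close> stands for the pair
  \<open>(x div M 0 k, x mod M 0 k)\<close> of a morphism \<open>i \<rightarrow> 0\<close> and a morphism \<open>0 \<rightarrow> k\<close>; for \<open>i \<noteq> 0\<close> the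
  top code \<open>M i i - 1\<close> is the identity of \<open>i\<close>; the codes left over are read as the pair
  \<open>(0, 0)\<close>.\<close>

definition through_fst :: "(nat \<Rightarrow> nat \<Rightarrow> nat) \<Rightarrow> nat \<Rightarrow> nat \<Rightarrow> nat \<Rightarrow> nat" where
  "through_fst M i j f = (if f < M i 0 * M 0 j then f div M 0 j else 0)"

definition through_snd :: "(nat \<Rightarrow> nat \<Rightarrow> nat) \<Rightarrow> nat \<Rightarrow> nat \<Rightarrow> nat \<Rightarrow> nat" where
  "through_snd M i j f = (if f < M i 0 * M 0 j then f mod M 0 j else 0)"

definition is_can_ident :: "(nat \<Rightarrow> nat \<Rightarrow> nat) \<Rightarrow> nat \<Rightarrow> nat \<Rightarrow> nat \<Rightarrow> bool" where
  "is_can_ident M i j f \<longleftrightarrow> i \<noteq> 0 \<and> j = i \<and> f = M i i - 1"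

definition can_ident :: "(nat \<Rightarrow> nat \<Rightarrow> nat) \<Rightarrow> nat \<Rightarrow> nat" where
  "can_ident M i = (if i = 0 then 0 else M i i - 1)"

definition can_cmp :: "(nat \<Rightarrow> nat \<Rightarrow> nat) \<Rightarrow> nat \<Rightarrow> nat \<Rightarrow> nat \<Rightarrow> nat \<Rightarrow> nat \<Rightarrow> nat" where
  "can_cmp M i j k g f =
     (if is_can_ident M i j f then g
      else if is_can_ident M j k g then f
      else through_fst M i j f * M 0 k + through_snd M j k g)"

locale category_conditions =
  fixes n :: nat and M :: "nat \<Rightarrow> nat \<Rightarrow> nat"
  assumes M_pos: "\<forall>i<n. \<forall>j<n. M i j > 0"
    and M_0_0: "M 0 0 = 1"
    and M_diag: "\<forall>i. 1 \<le> i \<and> i < n \<longrightarrow> M i i > M 0 i * M i 0"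
    and M_through: "\<forall>i j. 1 \<le> i \<and> i < n \<and> 1 \<le> j \<and> j < n \<longrightarrow> M i j \<ge> M i 0 * M 0 j"
begin

lemma M_through_le: "\<lbrakk>i < n; k < n\<rbrakk> \<Longrightarrow> M i 0 * M 0 k \<le> M i k"
  using M_through M_0_0 by (cases "i = 0 \<or> k = 0") auto

lemma not_is_can_ident_code:
  assumes "i < n" "x < M i 0 * M 0 k"
  shows "\<not> is_can_ident M i k x"
proof
  assume "is_can_ident M i k x"
  then have "1 \<le> i" "k = i" "x = M i i - 1" by (auto simp: is_can_ident_def)
  moreover have "M 0 i * M i 0 < M i i"
    using M_diag \<open>1 \<le> i\<close> \<open>i < n\<close> by simp
  ultimately show False using assms(2) by (simp add: mult.commute)
qed

lemma through_fst_less: "\<lbrakk>i < n; j < n\<rbrakk> \<Longrightarrow> through_fst M i j f < M i 0"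
  using M_pos by (simp add: through_fst_def less_mult_imp_div_less)

lemma through_snd_less: "\<lbrakk>i < n; j < n\<rbrakk> \<Longrightarrow> through_snd M i j f < M 0 j"
  using M_pos by (simp add: through_snd_def)

lemma through_code:
  assumes "a < M i 0" "b < M 0 k"
  shows "through_fst M i k (a * M 0 k + b) = a" "through_snd M i k (a * M 0 k + b) = b"
  using mult_add_less_mult[OF assms] assms by (simp_all add: through_fst_def through_snd_def)

lemma can_cmp_ident_code_left: "is_can_ident M i j f \<Longrightarrow> can_cmp M i j k g f = g"
  by (simp add: can_cmp_def)

lemma can_cmp_ident_code_right: "is_can_ident M j k g \<Longrightarrow> can_cmp M i j k g f = f"
  by (auto simp: can_cmp_def is_can_ident_def)

lemma can_cmp_code:
  assumes "i < n" "j < n" "k < n" "\<not> is_can_ident M i j f" "\<not> is_can_ident M j k g"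
  shows "can_cmp M i j k g f = through_fst M i j f * M 0 k + through_snd M j k g"
    and "can_cmp M i j k g f < M i 0 * M 0 k"
    and "\<not> is_can_ident M i k (can_cmp M i j k g f)"
proof -
  show eq: "can_cmp M i j k g f = through_fst M i j f * M 0 k + through_snd M j k g"
    using assms(4,5) by (simp add: can_cmp_def)
  show less: "can_cmp M i j k g f < M i 0 * M 0 k"
    unfolding eq using through_fst_less[OF assms(1,2)] through_snd_less[OF assms(2,3)]
    by (rule mult_add_less_mult)
  show "\<not> is_can_ident M i k (can_cmp M i j k g f)"
    using not_is_can_ident_code[OF assms(1) less] .
qed

lemma can_cmp_in_Hom:
  assumes "i < n" "j < n" "k < n" "f < M i j" "g < M j k"
  shows "can_cmp M i j k g f < M i k"
proof (cases "is_can_ident M i j f \<or> is_can_ident M j k g")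
  case True
  then show ?thesis using assms(4,5) by (auto simp: can_cmp_def is_can_ident_def)
next
  case False
  then have "can_cmp M i j k g f < M i 0 * M 0 k" using can_cmp_code(2)[OF assms(1-3)] by blast
  then show ?thesis using M_through_le[OF assms(1,3)] by simp
qed

lemma can_cmp_ident_left:
  assumes "i < n" "j < n" "f < M i j"
  shows "can_cmp M i j j (can_ident M j) f = f"
proof (cases "j = 0")
  case True
  then show ?thesis using assms M_0_0
    by (simp add: can_cmp_def is_can_ident_def can_ident_def through_fst_def through_snd_def)
next
  case False
  then show ?thesis by (simp add: can_cmp_def is_can_ident_def can_ident_def)
qed

lemma can_cmp_ident_right:
  assumes "i < n" "j < n" "f < M i j"
  shows "can_cmp M i i j f (can_ident M i) = f"
proof (cases "i = 0")
  case True
  then show ?thesis using assms M_0_0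
    by (simp add: can_cmp_def is_can_ident_def can_ident_def through_fst_def through_snd_def)
next
  case False
  then show ?thesis by (simp add: can_cmp_def is_can_ident_def can_ident_def)
qed

lemma can_cmp_assoc:
  assumes "i < n" "j < n" "k < n" "l < n"
  shows "can_cmp M i k l h (can_cmp M i j k g f) = can_cmp M i j l (can_cmp M j k l h g) f"
proof -
  consider "is_can_ident M i j f" | "is_can_ident M j k g" | "is_can_ident M k l h"
    | "\<not> is_can_ident M i j f" "\<not> is_can_ident M j k g" "\<not> is_can_ident M k l h"
    by blast
  then show ?thesis
  proof cases
    case 1
    then show ?thesis by (simp add: can_cmp_ident_code_left is_can_ident_def)
  next
    case 2
    then show ?thesis
      by (auto simp: can_cmp_ident_code_left can_cmp_ident_code_right is_can_ident_def)
  next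
    case 3
    then show ?thesis by (auto simp: can_cmp_ident_code_right is_can_ident_def)
  next
    case 4
    have "can_cmp M i k l h (can_cmp M i j k g f)
        = through_fst M i k (can_cmp M i j k g f) * M 0 l + through_snd M k l h"
      using can_cmp_code(1)[OF assms(1,3,4) can_cmp_code(3)[OF assms(1-3) 4(1,2)] 4(3)] .
    also have "through_fst M i k (can_cmp M i j k g f) = through_fst M i j f"
      unfolding can_cmp_code(1)[OF assms(1-3) 4(1,2)]
      using through_code(1)[OF through_fst_less[OF assms(1,2)] through_snd_less[OF assms(2,3)]] .
    also have "through_snd M k l h = through_snd M j l (can_cmp M j k l h g)"
      unfolding can_cmp_code(1)[OF assms(2-4) 4(2,3)]
      using through_code(2)[OF through_fst_less[OF assms(2,3)] through_snd_less[OF assms(3,4)]] by simp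
    also have "through_fst M i j f * M 0 l + through_snd M j l (can_cmp M j k l h g)
        = can_cmp M i j l (can_cmp M j k l h g) f"
      using can_cmp_code(1)[OF assms(1,2,4) 4(1) can_cmp_code(3)[OF assms(2-4) 4(2,3)]] by simp
    finally show ?thesis .
  qed
qed

lemma is_category_can: "is_category n (\<lambda>i j. {0..<M i j}) (can_cmp M) (can_ident M)"
  unfolding is_category_def
  using M_pos M_0_0 can_cmp_in_Hom can_cmp_assoc can_cmp_ident_left can_cmp_ident_right
  by (simp add: can_ident_def)

end

lemma Cat_nonempty_imp_conditions:
  assumes "Cat_nonempty n M"
    and pos: "\<forall>i<n. \<forall>j<n. M i j > 0"
    and M_0_0: "M 0 0 = 1"
    and End_nontrivial: "\<forall>i. 1 \<le> i \<and> i < n \<longrightarrow> M i i > 1"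
  shows "(\<forall>i. 1 \<le> i \<and> i < n \<longrightarrow> M i i > M 0 i * M i 0) \<and>
         (\<forall>i j. 1 \<le> i \<and> i < n \<and> 1 \<le> j \<and> j < n \<longrightarrow> M i j \<ge> M i 0 * M 0 j)"
proof -
  obtain Hom :: "nat \<Rightarrow> nat \<Rightarrow> nat set" and cmp ident
    where cat: "is_category n Hom cmp ident"
      and card: "\<forall>i<n. \<forall>j<n. finite (Hom i j) \<and> card (Hom i j) = M i j"
    using assms(1) unfolding Cat_nonempty_def by blast
  interpret small_category n Hom cmp ident by (rule small_category.intro, rule cat)
  have nonempty: "Hom i j \<noteq> {}" if "i < n" "j < n" for i j
    using card pos that by (metis card.empty less_irrefl)
  have Hom_0_0: "Hom 0 0 = {ident 0}" if "0 < n"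
    using card M_0_0 ident_in_Hom[OF that] that by (metis card_1_singletonE singletonD)
  show ?thesis
  proof (intro conjI allI impI)
    fix i assume i: "1 \<le> i \<and> i < n"
    then show "M i i > M 0 i * M i 0"
      using card_Hom_through_less[OF _ Hom_0_0 i[THEN conjunct2]] card End_nontrivial nonempty
      by (simp add: mult.commute)
  next
    fix i j assume "1 \<le> i \<and> i < n \<and> 1 \<le> j \<and> j < n"
    then show "M i j \<ge> M i 0 * M 0 j"
      using card_Hom_through_le[OF _ Hom_0_0] card nonempty by simp
  qed
qed

lemma (in category_conditions) Cat_nonempty: "Cat_nonempty n M"
  unfolding Cat_nonempty_def using is_category_can by fastforce

theorem mainTheorem6:
  fixes n :: nat and M :: "nat \<Rightarrow> nat \<Rightarrow> nat"
  assumes "n \<ge> 2"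
    and "\<forall>i<n. \<forall>j<n. M i j > 0"
    and "M 0 0 = 1"
    and "\<forall>i. 1 \<le> i \<and> i < n \<longrightarrow> M i i > 1"
  shows "Cat_nonempty n M \<longleftrightarrow>
           (\<forall>i. 1 \<le> i \<and> i < n \<longrightarrow> M i i > M 0 i * M i 0) \<and>
           (\<forall>i j. 1 \<le> i \<and> i < n \<and> 1 \<le> j \<and> j < n \<longrightarrow> M i j \<ge> M i 0 * M 0 j)"
    (is "_ \<longleftrightarrow> ?conditions")
proof
  assume "Cat_nonempty n M"
  then show ?conditions using Cat_nonempty_imp_conditions assms(2-4) by blast
next
  assume ?conditions
  then interpret category_conditions n M
    using assms(2,3) by unfold_locales blast+
  show "Cat_nonempty n M" by (rule Cat_nonempty)
qed

end
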